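(* Let $n \in \mathbb{Z}_{\geqslant 2}$, $k \in \mathbb{Z}_{\geqslant 1}$ and let $q \geqslant 3$ be a prime number. Then $$v_q\left(\sigma_k(n)\right) = \sum_{\substack{p^{\alpha} \| n \\ p^{k} \equiv 1 \pmod q}} v_q(\alpha+1) \;+\; \sum_{\substack{p^{\alpha} \| n \\ p \ne q \\ p^k \not\equiv 1 \pmod q \\ \varpi_k \mid \alpha + 1}} \Bigl( v_q(\alpha+1) + v_q(k) + v_q\left(\Phi_{\varpi_1}(p)\right) \Bigr),$$ where both sums run over primes $p$ dividing $n$ (with $\alpha = v_p(n)$), $\varpi_1 := \operatorname{ord}_q(p)$ and $\varpi_k := \operatorname{ord}_q(p^k)$.
   Context: $\sigma_k(n) := \sum_{d \mid n} d^k$. $v_q$ denotes the $q$-adic valuation. For a prime $p$, $p^{\alpha} \| n$ means $p^\alpha \mid n$ and $p^{\alpha+1} \nmid n$, i.e. $\alpha = v_p(n)$. $\operatorname{ord}_q(a)$ is the multiplicative order of $a$ modulo $q$ (for $q \nmid a$). $\Phi_m(X)$ denotes the $m$th cyclotomic polynomial. *)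

theory Defs
  imports "HOL-Number_Theory.Number_Theory" "HOL-Computational_Algebra.Computational_Algebra"
begin

definition sigma :: "nat \<Rightarrow> nat \<Rightarrow> nat" where
  "sigma k n = (\<Sum>d | d dvd n. d ^ k)"

definition cyclotomic :: "nat \<Rightarrow> complex poly" where
  "cyclotomic m = (\<Prod>j\<in>{j. 1 \<le> j \<and> j \<le> m \<and> coprime j m}.
                     [:- cis (2 * pi * real j / real m), 1:])"

definition cyclotomic_val :: "nat \<Rightarrow> int \<Rightarrow> int" where
  "cyclotomic_val m x = (THE z::int. poly (cyclotomic m) (of_int x) = of_int z)"

end

theory Submission
  imports Defs
begin

(*
  Since sigma_k is multiplicative, v_q(sigma_k(n)) is the sum, over the prime powers p^alpha
  exactly dividing n, of the valuations of the geometric sums 1 + a + ... + a^alpha, a = p^k.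
  If a = 1 (mod q), lifting the exponent gives v_q(alpha + 1); if p = q the sum is 1 (mod q).
  Otherwise the sum has the valuation of p^(k(alpha+1)) - 1, which vanishes unless
  w = ord_q(p) divides k(alpha + 1); then lifting the exponent from p^w gives
  v_q(p^w - 1) + v_q(k) + v_q(alpha + 1), since q does not divide w, a divisor of q - 1.
  Finally v_q(p^w - 1) = v_q(Phi_w(p)): in p^w - 1 = prod_{d | w} Phi_d(p) no factor with
  d < w is divisible by q, as it divides p^d - 1. That Phi_m has integer coefficients, so
  that cyclotomic_val is its value, follows by induction on m: Phi_m is the quotient of
  x^m - 1 by the monic integer polynomial prod_{d | m, d < m} Phi_d.
*)

section \<open>The divisor function\<close>

lemma gcd_mult_divisors_coprime:
  fixes a b x y :: nat
  assumes "coprime a b" "x dvd a" "y dvd b"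
  shows "gcd (x * y) a = x" and "gcd (x * y) b = y"
proof -
  have "coprime a y" "coprime b x"
    using assms by (meson coprime_divisors coprime_commute dvd_refl)+
  then show "gcd (x * y) a = x" "gcd (x * y) b = y"
    using assms by (simp_all add: gcd_mult_left_right_cancel gcd_mult_left_left_cancel gcd_nat.absorb1)
qed

lemma sigma_mult_coprime:
  assumes "coprime a b"
  shows "sigma k (a * b) = sigma k a * sigma k b"
proof -
  have "sigma k a * sigma k b = (\<Sum>(x, y)\<in>{x. x dvd a} \<times> {y. y dvd b}. (x * y) ^ k)"
    unfolding sigma_def sum_product sum.cartesian_product by (simp add: power_mult_distrib)
  also have "\<dots> = sigma k (a * b)"
    unfolding sigma_def
  proof (rule sum.reindex_bij_witness[where i = "\<lambda>d. (gcd d a, gcd d b)"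
                                        and j = "\<lambda>(x, y). x * y"])
    fix d assume "d \<in> {d. d dvd a * b}"
    then obtain x y where "d = x * y" "x dvd a" "y dvd b"
      using division_decomp by blast
    then show "(case (gcd d a, gcd d b) of (x, y) \<Rightarrow> x * y) = d"
      using gcd_mult_divisors_coprime[OF assms] by simp
  qed (auto simp: gcd_mult_divisors_coprime[OF assms] mult_dvd_mono)
  finally show ?thesis ..
qed

lemma sigma_pos:
  assumes "n > 0"
  shows "sigma k n > 0"
proof -
  have "1 ^ k \<le> sigma k n"
    unfolding sigma_def using assms by (intro member_le_sum) auto
  then show ?thesis
    by simp
qed

lemma sigma_prime_power:
  assumes "prime p"
  shows "sigma k (p ^ e) = (\<Sum>i<Suc e. (p ^ k) ^ i)"
proof -
  have "{d. d dvd p ^ e} = (\<lambda>i. p ^ i) ` {..<Suc e}"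
    using divides_primepow_nat[OF assms] by (auto simp: less_Suc_eq_le)
  moreover have "inj_on (\<lambda>i. p ^ i) {..<Suc e}"
    using prime_gt_1_nat[OF assms] by (auto simp: inj_on_def power_inject_exp)
  ultimately show ?thesis
    unfolding sigma_def by (simp add: sum.reindex power_mult[symmetric] mult.commute)
qed

lemma sigma_eq_prod_prime_factors:
  assumes "n > 0"
  shows "sigma k n = (\<Prod>p\<in>prime_factors n. sigma k (p ^ multiplicity p n))"
proof -
  have "sigma k (\<Prod>p\<in>P. p ^ multiplicity p n) = (\<Prod>p\<in>P. sigma k (p ^ multiplicity p n))"
    if "finite P" "P \<subseteq> prime_factors n" for P
    using that
  proof (induction P rule: finite_induct)
    case (insert p P)
    have "coprime p q" if "q \<in> P" for q
      using insert that by (intro primes_coprime) auto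
    then have "coprime (p ^ multiplicity p n) (\<Prod>p\<in>P. p ^ multiplicity p n)"
      by (intro prod_coprime_right) simp
    then show ?case
      using insert by (simp add: sigma_mult_coprime)
  qed (simp add: sigma_def)
  from this[of "prime_factors n"] show ?thesis
    by (simp only: prime_factorization_nat[OF assms, symmetric] finite_set_mset order_refl)
qed

section \<open>Lifting the exponent\<close>

lemma geometric_sum_mult:
  fixes a :: "'a::comm_semiring_1"
  shows "(\<Sum>i<m * n. a ^ i) = (\<Sum>i<m. a ^ i) * (\<Sum>j<n. (a ^ m) ^ j)"
proof (induction n)
  case (Suc n)
  have "(\<Sum>i<k + l. a ^ i) = (\<Sum>i<k. a ^ i) + (\<Sum>i<l. a ^ (k + i))" for k l
    by (induction l) (simp_all add: algebra_simps)
  from this[of "m * n" m]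
  have "(\<Sum>i<m * n + m. a ^ i) = (\<Sum>i<m * n. a ^ i) + (\<Sum>i<m. a ^ (m * n + i))" .
  with Suc show ?case
    by (simp add: algebra_simps power_add power_mult sum_distrib_right)
qed simp

lemma power_diff_1_eq_nat: "(a ^ m - 1 :: nat) = (a - 1) * (\<Sum>i<m. a ^ i)"
proof (cases "a = 0")
  case False
  then have "int (a ^ m - 1) = int a ^ m - 1"
    by (simp add: of_nat_diff Suc_leI)
  also have "\<dots> = (int a - 1) * (\<Sum>i<m. int a ^ i)"
    by (rule power_diff_1_eq)
  also have "\<dots> = int ((a - 1) * (\<Sum>i<m. a ^ i))"
    using False by (simp add: of_nat_diff Suc_leI)
  finally show ?thesis
    by (simp only: of_nat_eq_iff)
qed (cases m; simp)

lemma power_one_plus_cong: "[(1 + c) ^ i = 1 + int i * c] (mod c\<^sup>2)"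
proof (induction i)
  case (Suc i)
  have "[(1 + c) ^ Suc i = (1 + c) * (1 + int i * c)] (mod c\<^sup>2)"
    using Suc by (simp add: cong_scalar_left)
  also have "(1 + c) * (1 + int i * c) = (1 + int (Suc i) * c) + int i * c\<^sup>2"
    by (simp add: algebra_simps power2_eq_square)
  also have "[\<dots> = 1 + int (Suc i) * c] (mod c\<^sup>2)"
    by (simp add: cong_iff_dvd_diff)
  finally show ?case .
qed simp

lemma multiplicity_geometric_sum_prime:
  fixes a q :: nat
  assumes q: "prime q" "odd q" and a: "[a = 1] (mod q)"
  shows "multiplicity q (\<Sum>i<q. a ^ i) = 1"
proof -
  obtain c where c: "int a = 1 + int q * c"
    using a by (metis cong_int_iff cong_iff_dvd_diff dvdE diff_eq_eq add.commute of_nat_1)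
  obtain s where s: "q = 2 * s + 1"
    using q(2) by (rule oddE)
  have "[(\<Sum>i<q. int a ^ i) = (\<Sum>i<q. 1 + int i * (int q * c))] (mod (int q * c)\<^sup>2)"
    unfolding c by (intro cong_sum power_one_plus_cong)
  then have "[(\<Sum>i<q. int a ^ i) = (\<Sum>i<q. 1 + int i * (int q * c))] (mod (int q)\<^sup>2)"
    by (rule cong_dvd_modulus) (simp add: power_mult_distrib)
  also have "(\<Sum>i<q. 1 + int i * (int q * c)) = int q + (int q)\<^sup>2 * (c * int s)"
  proof -
    have "(\<Sum>i<q. int i) * 2 = int q * (int q - 1)"
      by (induction q) (simp_all add: algebra_simps)
    then have "(\<Sum>i<q. int i) = int q * int s"
      using s by simp
    moreover have "(\<Sum>i<q. 1 + int i * (int q * c)) = int q + (\<Sum>i<q. int i) * (int q * c)"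
      by (simp add: sum.distrib sum_distrib_right)
    ultimately show ?thesis
      by (simp add: algebra_simps power2_eq_square)
  qed
  also have "[int q + (int q)\<^sup>2 * (c * int s) = int q] (mod (int q)\<^sup>2)"
    by (simp add: cong_iff_dvd_diff)
  finally have S: "[(\<Sum>i<q. a ^ i) = q] (mod q\<^sup>2)"
    by (simp flip: cong_int_iff)
  show ?thesis
  proof (rule multiplicity_eqI)
    show "q ^ 1 dvd (\<Sum>i<q. a ^ i)"
      using cong_dvd_modulus_nat[OF S, of q] by (simp add: cong_dvd_iff power2_eq_square)
    have "\<not> q\<^sup>2 dvd q"
      using prime_gt_1_nat[OF q(1)] by (simp add: power2_eq_square)
    then show "\<not> q ^ Suc 1 dvd (\<Sum>i<q. a ^ i)"
      using cong_dvd_iff[OF S] by (simp add: numeral_2_eq_2)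
  qed
qed

lemma multiplicity_geometric_sum:
  fixes a q m :: nat
  assumes q: "prime q" "odd q" and a: "[a = 1] (mod q)"
  shows "multiplicity q (\<Sum>i<m. a ^ i) = multiplicity q m"
proof (induction m rule: less_induct)
  case (less m)
  show ?case
  proof (cases "q dvd m \<and> m > 0")
    case False
    have "[(\<Sum>i<m. a ^ i) = (\<Sum>i<m. 1)] (mod q)"
      using a by (intro cong_sum) (metis cong_pow power_one)
    then have "q dvd (\<Sum>i<m. a ^ i) \<longleftrightarrow> q dvd m"
      by (simp add: cong_dvd_iff)
    with False show ?thesis
      by (auto simp: not_dvd_imp_multiplicity_0)
  next
    case True
    then obtain m' where m: "m = m' * q" "m' > 0"
      by (auto elim!: dvdE simp: mult.commute)
    have "m' < m"
      using m prime_gt_1_nat[OF q(1)] by simp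
    have "[a ^ m' = 1] (mod q)"
      using a by (metis cong_pow power_one)
    then have last: "multiplicity q (\<Sum>j<q. (a ^ m') ^ j) = 1"
      using multiplicity_geometric_sum_prime[OF q] by blast
    have "(\<Sum>i<m'. a ^ i) \<noteq> 0"
      using \<open>m' > 0\<close> by (auto simp: sum_eq_0_iff intro!: bexI[where x = 0])
    moreover have "(\<Sum>j<q. (a ^ m') ^ j) \<noteq> 0"
      using last by (metis multiplicity_zero zero_neq_one)
    ultimately have "multiplicity q (\<Sum>i<m. a ^ i) = multiplicity q (\<Sum>i<m'. a ^ i) + 1"
      using q(1) by (simp add: m geometric_sum_mult prime_elem_multiplicity_mult_distrib last)
    also have "\<dots> = multiplicity q (q * m')"
      using less.IH[OF \<open>m' < m\<close>] m prime_gt_1_nat[OF q(1)] by (simp add: multiplicity_times_same)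
    finally show ?thesis
      by (simp add: m mult.commute)
  qed
qed

lemma multiplicity_geometric_sum_not_cong_one:
  fixes a q m :: nat
  assumes "prime q" "a > 1" "\<not> [a = 1] (mod q)"
  shows "multiplicity q (\<Sum>i<m. a ^ i) = multiplicity q (a ^ m - 1)"
proof (cases "m = 0")
  case False
  have "\<not> q dvd a - 1"
    using assms(2,3) by (simp add: cong_altdef_nat cong_sym_eq)
  moreover have "(\<Sum>i<m. a ^ i) \<noteq> 0"
    using False by (auto simp: sum_eq_0_iff intro!: bexI[where x = 0])
  moreover have "a - 1 \<noteq> 0"
    using assms(2) by simp
  ultimately have "multiplicity q ((a - 1) * (\<Sum>i<m. a ^ i)) = multiplicity q (\<Sum>i<m. a ^ i)"
    using assms(1) by (simp add: prime_elem_multiplicity_mult_distrib not_dvd_imp_multiplicity_0)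
  then show ?thesis
    by (simp only: power_diff_1_eq_nat)
qed simp

lemma multiplicity_power_diff_1_ord_dvd:
  fixes p q n :: nat
  assumes q: "prime q" "odd q" and p: "p > 1" "coprime p q" and n: "n > 0" "ord q p dvd n"
  shows "multiplicity q (p ^ n - 1) = multiplicity q (p ^ ord q p - 1) + multiplicity q n"
proof -
  define w where "w = ord q p"
  obtain t where t: "n = w * t"
    using n(2) unfolding w_def by blast
  have "w dvd q - 1"
    using order_divides_totient[of q p] p(2) q(1) unfolding w_def
    by (simp add: coprime_commute totient_prime)
  moreover have "w > 0"
    using p(2) unfolding w_def by (simp add: coprime_commute)
  moreover have "w \<le> q - 1"
    using calculation prime_gt_1_nat[OF q(1)] by (intro dvd_imp_le) auto
  ultimately have "\<not> q dvd w"
    by (auto dest: dvd_imp_le)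
  have "t > 0"
    using n(1) t by auto
  have "p ^ w > 1"
    using p(1) \<open>w > 0\<close> by (rule one_less_power)
  have "[p ^ w = 1] (mod q)"
    unfolding w_def by (rule ord)
  then have "multiplicity q (\<Sum>i<t. (p ^ w) ^ i) = multiplicity q t"
    by (rule multiplicity_geometric_sum[OF q])
  moreover have "(\<Sum>i<t. (p ^ w) ^ i) \<noteq> 0"
    using \<open>t > 0\<close> by (auto simp: sum_eq_0_iff intro!: bexI[where x = 0])
  then have "multiplicity q (p ^ n - 1) = multiplicity q (p ^ w - 1) + multiplicity q (\<Sum>i<t. (p ^ w) ^ i)"
    unfolding t power_mult power_diff_1_eq_nat[of "p ^ w"] using q(1) \<open>p ^ w > 1\<close>
    by (intro prime_elem_multiplicity_mult_distrib) auto
  moreover have "multiplicity q n = multiplicity q t"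
    using q(1) \<open>\<not> q dvd w\<close> \<open>w > 0\<close> \<open>t > 0\<close>
    by (simp add: t prime_elem_multiplicity_mult_distrib not_dvd_imp_multiplicity_0)
  ultimately show ?thesis
    unfolding w_def by simp
qed

section \<open>Cyclotomic polynomials\<close>

lemma monom_diff_1_eq_prod_roots_unity:
  assumes m: "m > 0"
  shows "(monom 1 m - 1 :: complex poly) = (\<Prod>z | z ^ m = 1. [:-z, 1:])"
proof -
  define p :: "complex poly" where "p = monom 1 m - 1"
  have poly_p: "poly p z = z ^ m - 1" for z
    by (simp add: p_def poly_monom)
  have "lead_coeff p = lead_coeff (- 1 + monom (1 :: complex) m)"
    by (simp add: p_def)
  also have "\<dots> = 1"
    using m by (subst lead_coeff_add_le) (simp_all add: degree_monom_eq)
  finally have "lead_coeff p = 1" .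
  have "rsquarefree p"
    unfolding rsquarefree_roots
  proof (intro allI notI)
    fix z assume "poly p z = 0 \<and> poly (pderiv p) z = 0"
    then have "z ^ m = 1" "of_nat m * z ^ (m - 1) = 0"
      by (auto simp: poly_p p_def pderiv_monom pderiv_diff poly_monom)
    with m show False
      by (cases "z = 0") (auto simp: power_0_left)
  qed
  then have "p = smult (lead_coeff p) (\<Prod>z | poly p z = 0. [:-z, 1:])"
    by (rule complex_poly_decompose_rsquarefree[symmetric])
  also have "\<dots> = (\<Prod>z | z ^ m = 1. [:-z, 1:])"
    by (simp add: \<open>lead_coeff p = 1\<close> poly_p)
  finally show ?thesis
    unfolding p_def .
qed

lemma bij_betw_roots_unity_atLeastAtMost:
  assumes m: "m > 0"
  shows "bij_betw (\<lambda>k. cis (2 * pi * real k / real m)) {1..m} {z. z ^ m = 1}"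
proof -
  have "bij_betw (\<lambda>k. k mod m) {1..m} {..<m}"
  proof (rule bij_betw_byWitness[where f' = "\<lambda>j. if j = 0 then m else j"])
    show "\<forall>k\<in>{1..m}. (if k mod m = 0 then m else k mod m) = k"
    proof
      fix k assume "k \<in> {1..m}"
      then consider "1 \<le> k" "k < m" | "k = m"
        by fastforce
      then show "(if k mod m = 0 then m else k mod m) = k"
        by cases auto
    qed
  qed (use m in auto)
  from bij_betw_trans[OF this bij_betw_roots_unity[OF m]]
  show ?thesis
  proof (rule bij_betw_cong[THEN iffD1, rotated])
    fix k assume "k \<in> {1..m}"
    then consider "k < m" | "k = m"
      by fastforce
    then show "((\<lambda>k. cis (2 * pi * real k / real m)) \<circ> (\<lambda>k. k mod m)) k
               = cis (2 * pi * real k / real m)"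
      by cases (use m in \<open>auto simp: complex_eq_iff\<close>)
  qed
qed

lemma bij_betw_divisors_coprime:
  fixes m :: nat
  assumes m: "m > 0"
  shows "bij_betw (\<lambda>(d, j). j * (m div d))
           (SIGMA d:{d. d dvd m}. {j. 1 \<le> j \<and> j \<le> d \<and> coprime j d}) {1..m}"
proof -
  have inv: "m div gcd (j * (m div d)) m = d \<and> j * (m div d) div gcd (j * (m div d)) m = j"
    if "d dvd m" "coprime j d" for d j
  proof -
    obtain e where e: "m = d * e"
      using \<open>d dvd m\<close> by blast
    with m have "e > 0" "d > 0" by auto
    have "gcd (j * e) (d * e) = e"
      using \<open>coprime j d\<close> gcd_mult_distrib_nat[of e j d] by (simp add: ac_simps)
    with e \<open>e > 0\<close> \<open>d > 0\<close> show ?thesis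
      by simp
  qed
  have "k div gcd k m * (m div (m div gcd k m)) = k" for k
  proof -
    have "gcd k m dvd m" "gcd k m > 0"
      using m by auto
    then have "m div (m div gcd k m) = gcd k m"
      using m by (simp add: div_div_eq_right)
    then show ?thesis
      by simp
  qed
  moreover have "j * (m div d) \<in> {1..m}" if "d dvd m" "1 \<le> j" "j \<le> d" for d j
  proof -
    have "j * (m div d) \<le> d * (m div d)"
      using \<open>j \<le> d\<close> by simp
    with that m show ?thesis
      by (auto simp: dvd_div_eq_0_iff)
  qed
  moreover have "m div gcd k m dvd m \<and> 1 \<le> k div gcd k m \<and> k div gcd k m \<le> m div gcd k m
                   \<and> coprime (k div gcd k m) (m div gcd k m)"
    if "k \<in> {1..m}" for k
    using that by (auto intro: div_le_mono div_gcd_coprime simp: div_greater_zero_iff Suc_le_eq)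
       (simp add: div_dvd_iff_mult)
  ultimately show ?thesis
    by (intro bij_betw_byWitness[where f' = "\<lambda>k. (m div gcd k m, k div gcd k m)"])
       (auto simp: inv dvd_div_eq_mult)
qed

lemma lead_coeff_cyclotomic: "lead_coeff (cyclotomic m) = 1"
  unfolding cyclotomic_def by (simp add: lead_coeff_prod)

lemma prod_cyclotomic_divisors:
  assumes m: "m > 0"
  shows "(\<Prod>d | d dvd m. cyclotomic d) = monom 1 m - 1"
proof -
  define S where "S = (SIGMA d:{d. d dvd m}. {j. 1 \<le> j \<and> j \<le> d \<and> coprime j d})"
  have "(\<Prod>d | d dvd m. cyclotomic d) = (\<Prod>(d, j)\<in>S. [:- cis (2 * pi * real j / real d), 1:])"
    unfolding cyclotomic_def S_def using m by (subst prod.Sigma) auto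
  also have "\<dots> = (\<Prod>(d, j)\<in>S. [:- cis (2 * pi * real (j * (m div d)) / real m), 1:])"
  proof (intro prod.cong refl, clarify)
    fix d j assume "(d, j) \<in> S"
    then have "d dvd m" "d > 0"
      using m unfolding S_def by auto
    then have "real (j * (m div d)) / real m = real j / real d"
      using m by (simp add: real_of_nat_div field_simps)
    then show "[:- cis (2 * pi * real j / real d), 1:] = [:- cis (2 * pi * real (j * (m div d)) / real m), 1:]"
      by (simp add: times_divide_eq_right[symmetric] del: times_divide_eq_right)
  qed
  also have "\<dots> = (\<Prod>k\<in>{1..m}. [:- cis (2 * pi * real k / real m), 1:])"
    unfolding S_def using prod.reindex_bij_betw[OF bij_betw_divisors_coprime[OF m],
      of "\<lambda>k. [:- cis (2 * pi * real k / real m), 1:]"] by (simp add: case_prod_unfold)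
  also have "\<dots> = (\<Prod>z | z ^ m = 1. [:-z, 1:])"
    by (rule prod.reindex_bij_betw[OF bij_betw_roots_unity_atLeastAtMost[OF m]])
  also have "\<dots> = monom 1 m - 1"
    by (rule monom_diff_1_eq_prod_roots_unity[OF m, symmetric])
  finally show ?thesis .
qed

lemma map_poly_of_int_add:
  "map_poly (of_int :: int \<Rightarrow> 'a::comm_ring_1) (p + q) = map_poly of_int p + map_poly of_int q"
  by (simp add: poly_eq_iff coeff_map_poly)

lemma map_poly_of_int_diff:
  "map_poly (of_int :: int \<Rightarrow> 'a::comm_ring_1) (p - q) = map_poly of_int p - map_poly of_int q"
  by (simp add: poly_eq_iff coeff_map_poly)

lemma map_poly_of_int_mult:
  "map_poly (of_int :: int \<Rightarrow> 'a::comm_ring_1) (p * q) = map_poly of_int p * map_poly of_int q"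
  by (simp add: poly_eq_iff coeff_mult coeff_map_poly)

lemma map_poly_of_int_prod:
  "map_poly (of_int :: int \<Rightarrow> 'a::comm_ring_1) (\<Prod>x\<in>A. f x)
     = (\<Prod>x\<in>A. map_poly of_int (f x))"
  by (induction A rule: infinite_finite_induct) (simp_all add: map_poly_of_int_mult)

lemma poly_map_poly_of_int:
  "poly (map_poly (of_int :: int \<Rightarrow> 'a::comm_ring_1) p) (of_int x) = of_int (poly p x)"
  by (induction p) (simp_all add: map_poly_pCons)

lemma degree_map_poly_of_int [simp]:
  "degree (map_poly (of_int :: int \<Rightarrow> 'a::{comm_ring_1, ring_char_0}) p) = degree p"
  by (rule degree_map_poly) simp

lemma lead_coeff_map_poly_of_int [simp]:
  "lead_coeff (map_poly (of_int :: int \<Rightarrow> 'a::{comm_ring_1, ring_char_0}) p) = of_int (lead_coeff p)"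
  by (simp add: coeff_map_poly)

lemma int_poly_quotient_by_monic:
  fixes f g :: "int poly" and h :: "'a::{idom, ring_char_0} poly"
  assumes fgh: "map_poly of_int f = map_poly of_int g * h" and g: "lead_coeff g = 1"
  shows "\<exists>h'. h = map_poly of_int h'"
proof -
  obtain h' r where "pseudo_divmod f g = (h', r)"
    by fastforce
  moreover have "g \<noteq> 0"
    using g by auto
  ultimately have div: "f = g * h' + r" and r: "r = 0 \<or> degree r < degree g"
    using pseudo_divmod[of g f h' r] g by auto
  have eq: "map_poly of_int g * (h - map_poly of_int h') = map_poly (of_int :: int \<Rightarrow> 'a) r"
    using fgh by (simp add: div map_poly_of_int_add map_poly_of_int_mult algebra_simps)
  have "h - map_poly of_int h' = 0"
  proof (rule ccontr)
    assume ne: "h - map_poly of_int h' \<noteq> 0"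
    have "map_poly (of_int :: int \<Rightarrow> 'a) g \<noteq> 0"
      using \<open>g \<noteq> 0\<close> by (simp add: map_poly_eq_0_iff)
    with ne have "map_poly (of_int :: int \<Rightarrow> 'a) r \<noteq> 0"
      unfolding eq[symmetric] by simp
    moreover have "degree (map_poly (of_int :: int \<Rightarrow> 'a) r) = degree g + degree (h - map_poly of_int h')"
      unfolding eq[symmetric] using ne \<open>map_poly of_int g \<noteq> 0\<close> by (simp add: degree_mult_eq)
    ultimately have "r \<noteq> 0" and "degree g \<le> degree r"
      by auto
    with r show False
      by simp
  qed
  then show ?thesis
    by auto
qed

lemma cyclotomic_0: "cyclotomic 0 = 1"
proof -
  have "{j. 1 \<le> j \<and> j \<le> 0 \<and> coprime j (0 :: nat)} = {}"
    by auto
  then show ?thesis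
    unfolding cyclotomic_def by (simp only: prod.empty)
qed

lemma cyclotomic_int_poly: "\<exists>Q. cyclotomic m = map_poly of_int Q"
proof (induction m rule: less_induct)
  case (less m)
  show ?case
  proof (cases "m = 0")
    case True
    then show ?thesis
      by (intro exI[of _ 1]) (simp add: cyclotomic_0)
  next
    case False
    then have "m > 0"
      by simp
    define D where "D = {d. d dvd m} - {m}"
    have "d < m" if "d \<in> D" for d
      using that \<open>m > 0\<close> dvd_imp_le[of d m] unfolding D_def by auto
    then have "\<forall>d\<in>D. \<exists>Q. cyclotomic d = map_poly of_int Q"
      using less.IH by blast
    then obtain Q where Q: "\<And>d. d \<in> D \<Longrightarrow> cyclotomic d = map_poly of_int (Q d)"
      by metis
    have "monom 1 m - 1 = cyclotomic m * (\<Prod>d\<in>D. cyclotomic d)"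
      unfolding prod_cyclotomic_divisors[OF \<open>m > 0\<close>, symmetric] D_def
      using \<open>m > 0\<close> by (subst prod.remove[of _ m]) auto
    also have "(\<Prod>d\<in>D. cyclotomic d) = map_poly of_int (\<Prod>d\<in>D. Q d)"
      by (simp add: Q map_poly_of_int_prod)
    finally have "map_poly of_int (monom 1 m - 1) = map_poly of_int (\<Prod>d\<in>D. Q d) * cyclotomic m"
      by (simp add: map_poly_of_int_diff map_poly_monom mult.commute)
    moreover have "lead_coeff (\<Prod>d\<in>D. Q d) = 1"
    proof -
      have "lead_coeff (Q d) = 1" if "d \<in> D" for d
      proof -
        have "(of_int (lead_coeff (Q d)) :: complex) = 1"
          using lead_coeff_cyclotomic[of d] by (simp only: Q[OF that] lead_coeff_map_poly_of_int)
        then show ?thesis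
          by simp
      qed
      then show ?thesis
        by (simp add: lead_coeff_prod)
    qed
    ultimately show ?thesis
      by (rule int_poly_quotient_by_monic)
  qed
qed

lemma of_int_cyclotomic_val: "of_int (cyclotomic_val m x) = poly (cyclotomic m) (of_int x)"
proof -
  obtain Q where Q: "cyclotomic m = map_poly of_int Q"
    using cyclotomic_int_poly by blast
  have "cyclotomic_val m x = poly Q x"
    unfolding cyclotomic_val_def Q poly_map_poly_of_int by (rule the_equality) auto
  then show ?thesis
    by (simp add: Q poly_map_poly_of_int)
qed

lemma prod_cyclotomic_val_divisors:
  assumes "m > 0"
  shows "(\<Prod>d | d dvd m. cyclotomic_val d x) = x ^ m - 1"
proof -
  have "(of_int (\<Prod>d | d dvd m. cyclotomic_val d x) :: complex)
        = poly (\<Prod>d | d dvd m. cyclotomic d) (of_int x)"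
    by (simp add: of_int_cyclotomic_val poly_prod)
  also have "\<dots> = of_int (x ^ m - 1)"
    by (simp add: prod_cyclotomic_divisors[OF assms] poly_monom)
  finally show ?thesis
    by (simp only: of_int_eq_iff)
qed

lemma multiplicity_of_nat: "multiplicity (int q) (int x) = multiplicity q x"
  by (simp add: multiplicity_def flip: of_nat_power)

lemma not_dvd_cyclotomic_val_below_ord:
  fixes p q d :: nat
  assumes "0 < d" "d < ord q p"
  shows "\<not> int q dvd cyclotomic_val d (int p)"
proof
  assume "int q dvd cyclotomic_val d (int p)"
  moreover have "cyclotomic_val d (int p) dvd int p ^ d - 1"
    unfolding prod_cyclotomic_val_divisors[OF \<open>0 < d\<close>, symmetric]
    using \<open>0 < d\<close> by (intro dvd_prodI) auto
  ultimately have "int q dvd int (p ^ d) - int 1"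
    by (metis dvd_trans of_nat_1 of_nat_power)
  then have "[p ^ d = 1] (mod q)"
    by (simp only: cong_iff_dvd_diff cong_int_iff[symmetric])
  with ord_minimal[OF assms] show False
    by blast
qed

lemma multiplicity_cyclotomic_val_ord:
  fixes p q :: nat
  assumes q: "prime q" and p: "p > 1" "coprime p q"
  shows "multiplicity (int q) (cyclotomic_val (ord q p) (int p)) = multiplicity q (p ^ ord q p - 1)"
proof -
  define w where "w = ord q p"
  define D where "D = {d. d dvd w} - {w}"
  have "w > 0"
    using p(2) unfolding w_def by (simp add: coprime_commute)
  then have "finite {d. d dvd w}"
    by simp
  then have factor: "int p ^ w - 1 = cyclotomic_val w (int p) * (\<Prod>d\<in>D. cyclotomic_val d (int p))"
    unfolding D_def prod_cyclotomic_val_divisors[OF \<open>w > 0\<close>, symmetric]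
    by (subst prod.remove[of _ w]) auto
  have "\<not> int q dvd cyclotomic_val d (int p)" if "d \<in> D" for d
  proof -
    have "d dvd w" "d \<noteq> w"
      using that unfolding D_def by auto
    with \<open>w > 0\<close> have "0 < d" "d < ord q p"
      using dvd_imp_le[of d w] unfolding w_def by (auto intro: Nat.gr0I)
    then show ?thesis
      by (rule not_dvd_cyclotomic_val_below_ord)
  qed
  then have not_dvd: "\<not> int q dvd (\<Prod>d\<in>D. cyclotomic_val d (int p))"
    using q \<open>finite {d. d dvd w}\<close> unfolding D_def by (subst prime_dvd_prod_iff) auto
  have "p ^ w > 1"
    using p(1) \<open>w > 0\<close> by (rule one_less_power)
  then have cast: "int p ^ w - 1 = int (p ^ w - 1)"
    by (simp add: of_nat_diff)
  have "cyclotomic_val w (int p) * (\<Prod>d\<in>D. cyclotomic_val d (int p)) \<noteq> 0"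
    unfolding factor[symmetric] using p(1) \<open>w > 0\<close> by (simp flip: of_nat_power)
  then have "multiplicity (int q) (int p ^ w - 1) = multiplicity (int q) (cyclotomic_val w (int p))"
    unfolding factor using q not_dvd
    by (simp add: prime_elem_multiplicity_mult_distrib not_dvd_imp_multiplicity_0)
  with cast show ?thesis
    unfolding w_def by (simp add: multiplicity_of_nat)
qed

section \<open>Valuation of the divisor function\<close>

lemma not_dvd_sigma_prime_power:
  assumes p: "prime p" and k: "k \<ge> 1"
  shows "\<not> p dvd sigma k (p ^ \<alpha>)"
proof -
  have "[p ^ k = 0] (mod p)"
    using k by (simp add: cong_0_iff)
  then have "[sigma k (p ^ \<alpha>) = (\<Sum>i<Suc \<alpha>. 0 ^ i)] (mod p)"
    unfolding sigma_prime_power[OF p] by (intro cong_sum cong_pow)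
  moreover have "(\<Sum>i<Suc \<alpha>. (0 :: nat) ^ i) = 1"
    by (induction \<alpha>) simp_all
  ultimately have "[sigma k (p ^ \<alpha>) = 1] (mod p)"
    by simp
  then show ?thesis
    using prime_gt_1_nat[OF p] by (simp add: cong_dvd_iff)
qed

lemma multiplicity_sigma_prime_power_not_cong_one:
  fixes p q k \<alpha> :: nat
  assumes q: "prime q" "odd q" and p: "prime p" "p \<noteq> q" and k: "k \<ge> 1"
    and not_one: "\<not> [p ^ k = 1] (mod q)"
  shows "multiplicity q (sigma k (p ^ \<alpha>)) =
    (if ord q (p ^ k) dvd \<alpha> + 1
     then multiplicity q (\<alpha> + 1) + multiplicity q k
          + multiplicity (int q) (cyclotomic_val (ord q p) (int p))
     else 0)"
proof -
  have "p ^ k > 1"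
    using prime_gt_1_nat[OF p(1)] k by (intro one_less_power) auto
  then have v: "multiplicity q (sigma k (p ^ \<alpha>)) = multiplicity q (p ^ (k * (\<alpha> + 1)) - 1)"
    unfolding sigma_prime_power[OF p(1)] Suc_eq_plus1 power_mult
    by (rule multiplicity_geometric_sum_not_cong_one[OF q(1) _ not_one])
  have "coprime p q"
    using p q(1) by (simp add: primes_coprime)
  have ord_iff: "ord q (p ^ k) dvd \<alpha> + 1 \<longleftrightarrow> ord q p dvd k * (\<alpha> + 1)"
    by (simp only: ord_divides[symmetric] power_mult)
  show ?thesis
  proof (cases "ord q (p ^ k) dvd \<alpha> + 1")
    case True
    have "multiplicity q (p ^ (k * (\<alpha> + 1)) - 1)
        = multiplicity q (p ^ ord q p - 1) + multiplicity q (k * (\<alpha> + 1))"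
      using True k ord_iff
      by (intro multiplicity_power_diff_1_ord_dvd[OF q prime_gt_1_nat[OF p(1)] \<open>coprime p q\<close>]) auto
    moreover have "multiplicity q (k * (\<alpha> + 1)) = multiplicity q k + multiplicity q (\<alpha> + 1)"
      using k q(1) by (intro prime_elem_multiplicity_mult_distrib) auto
    ultimately show ?thesis
      using True
      by (simp add: v multiplicity_cyclotomic_val_ord[OF q(1) prime_gt_1_nat[OF p(1)] \<open>coprime p q\<close>])
  next
    case False
    then have "\<not> [p ^ (k * (\<alpha> + 1)) = 1] (mod q)"
      using ord_iff ord_divides[of p "k * (\<alpha> + 1)" q] by blast
    moreover have "1 \<le> p ^ (k * (\<alpha> + 1))"
      using prime_gt_0_nat[OF p(1)] by simp
    ultimately have "\<not> q dvd p ^ (k * (\<alpha> + 1)) - 1"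
      using cong_altdef_nat[of 1 "p ^ (k * (\<alpha> + 1))" q] by simp
    with False show ?thesis
      by (simp add: v not_dvd_imp_multiplicity_0)
  qed
qed

lemma multiplicity_sigma_prime_power:
  fixes p q k \<alpha> :: nat
  assumes q: "prime q" "odd q" and p: "prime p" and k: "k \<ge> 1"
  shows "multiplicity q (sigma k (p ^ \<alpha>)) =
    (if [p ^ k = 1] (mod q) then multiplicity q (\<alpha> + 1)
     else if p \<noteq> q \<and> ord q (p ^ k) dvd \<alpha> + 1
     then multiplicity q (\<alpha> + 1) + multiplicity q k
          + multiplicity (int q) (cyclotomic_val (ord q p) (int p))
     else 0)"
proof -
  consider "[p ^ k = 1] (mod q)" | "p = q" | "\<not> [p ^ k = 1] (mod q)" "p \<noteq> q"
    by blast
  then show ?thesis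
  proof cases
    case 1
    then show ?thesis
      using multiplicity_geometric_sum[OF q 1, of "\<alpha> + 1"]
      by (simp only: sigma_prime_power[OF p] Suc_eq_plus1 if_True)
  next
    case 2
    have "q dvd p ^ k"
      using 2 k by simp
    then have "\<not> [p ^ k = 1] (mod q)"
      using prime_gt_1_nat[OF q(1)] by (auto simp: cong_dvd_iff)
    with 2 show ?thesis
      using not_dvd_sigma_prime_power[OF p k] by (simp add: not_dvd_imp_multiplicity_0)
  next
    case 3
    then show ?thesis
      by (simp add: multiplicity_sigma_prime_power_not_cong_one[OF q p 3(2) k 3(1)])
  qed
qed

theorem theorem1:
  fixes n k q :: nat
  assumes "n \<ge> 2" and "k \<ge> 1" and "prime q" and "q \<ge> 3"
  shows "multiplicity q (sigma k n) =
    (\<Sum>p\<in>{p\<in>prime_factors n. [p ^ k = 1] (mod q)}. multiplicity q (multiplicity p n + 1))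
    + (\<Sum>p\<in>{p\<in>prime_factors n. p \<noteq> q \<and> \<not> [p ^ k = 1] (mod q)
                 \<and> ord q (p ^ k) dvd multiplicity p n + 1}.
         multiplicity q (multiplicity p n + 1) + multiplicity q k
         + multiplicity (int q) (cyclotomic_val (ord q p) (int p)))"
proof -
  have "odd q"
    using assms(3,4) by (intro prime_odd_nat) auto
  have "n > 0"
    using assms(1) by simp
  have "multiplicity q (sigma k n)
        = (\<Sum>p\<in>prime_factors n. multiplicity q (sigma k (p ^ multiplicity p n)))"
    unfolding sigma_eq_prod_prime_factors[OF \<open>n > 0\<close>]
    using assms(3) sigma_pos
    by (intro prime_elem_multiplicity_prod_distrib) (auto simp: image_iff in_prime_factors_iff prime_gt_0_nat)
  also have "\<dots> = (\<Sum>p\<in>prime_factors n.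
      (if [p ^ k = 1] (mod q) then multiplicity q (multiplicity p n + 1) else 0)
      + (if p \<noteq> q \<and> \<not> [p ^ k = 1] (mod q) \<and> ord q (p ^ k) dvd multiplicity p n + 1
         then multiplicity q (multiplicity p n + 1) + multiplicity q k
              + multiplicity (int q) (cyclotomic_val (ord q p) (int p)) else 0))"
    using assms(2,3) \<open>odd q\<close>
    by (intro sum.cong refl) (simp add: in_prime_factors_iff multiplicity_sigma_prime_power)
  also note sum.distrib
  finally show ?thesis
    by (simp only: sum.inter_filter finite_set_mset)
qed

end
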